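(* Let $\pi\colon (X,T)\to(Y,S)$ be a factor map between systems, with $(Y,S)$ minimal, and assume that for some $y_0\in Y$ the fiber $\pi^{-1}(\{y_0\})$ is proximal. Then $\pi$ is a proximal extension, i.e. every fiber $\pi^{-1}(\{y\})$, $y\in Y$, is proximal.
   Context: A system is a compact metric space with a homeomorphism. A factor map is a continuous surjection $\pi$ with $\pi\circ T=S\circ\pi$. Points $x_1,x_2\in X$ are proximal if $\inf_{n\in\mathbb N} d(T^nx_1,T^nx_2)=0$; a set $F\subset X$ is proximal if every pair of its points is proximal. $\pi$ is a proximal extension if every fiber $\pi^{-1}(\{y\})$ is proximal. *)

theory Defs
  imports "HOL-Analysis.Analysis"
begin

definition dyn_system :: "'a::metric_space set \<Rightarrow> ('a \<Rightarrow> 'a) \<Rightarrow> bool" where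
  "dyn_system X T \<longleftrightarrow> compact X \<and> (\<exists>Tinv. homeomorphism X X T Tinv)"

definition minimal_system :: "'a::metric_space set \<Rightarrow> ('a \<Rightarrow> 'a) \<Rightarrow> bool" where
  "minimal_system X T \<longleftrightarrow> dyn_system X T \<and>
     (\<forall>Z. Z \<subseteq> X \<and> closed Z \<and> Z \<noteq> {} \<and> T ` Z \<subseteq> Z \<longrightarrow> Z = X)"

definition factor_map ::
  "'a::metric_space set \<Rightarrow> ('a \<Rightarrow> 'a) \<Rightarrow> 'b::metric_space set \<Rightarrow> ('b \<Rightarrow> 'b) \<Rightarrow> ('a \<Rightarrow> 'b) \<Rightarrow> bool" where
  "factor_map X T Y S \<pi> \<longleftrightarrow> dyn_system X T \<and> dyn_system Y S \<and>
     continuous_on X \<pi> \<and> \<pi> ` X = Y \<and> (\<forall>x\<in>X. \<pi> (T x) = S (\<pi> x))"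

definition proximal_pair :: "('a::metric_space \<Rightarrow> 'a) \<Rightarrow> 'a \<Rightarrow> 'a \<Rightarrow> bool" where
  "proximal_pair T x1 x2 \<longleftrightarrow> (INF n::nat. dist ((T ^^ n) x1) ((T ^^ n) x2)) = 0"

definition proximal_set :: "('a::metric_space \<Rightarrow> 'a) \<Rightarrow> 'a set \<Rightarrow> bool" where
  "proximal_set T F \<longleftrightarrow> (\<forall>x1\<in>F. \<forall>x2\<in>F. proximal_pair T x1 x2)"

definition fiber :: "'a set \<Rightarrow> ('a \<Rightarrow> 'b) \<Rightarrow> 'b \<Rightarrow> 'a set" where
  "fiber X \<pi> y = {x \<in> X. \<pi> x = y}"

definition proximal_extension ::
  "'a::metric_space set \<Rightarrow> ('a \<Rightarrow> 'a) \<Rightarrow> 'b set \<Rightarrow> ('a \<Rightarrow> 'b) \<Rightarrow> bool" where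
  "proximal_extension X T Y \<pi> \<longleftrightarrow> (\<forall>y\<in>Y. proximal_set T (fiber X \<pi> y))"

end

theory Submission
  imports Defs
begin

(* Let x1, x2 lie in a common fiber and suppose they are not proximal,
   so that their orbits stay at distance at least some delta > 0.  Let K be the
   closure of the orbit of (x1, x2) under the product map T x T.  Then K is a
   compact, T x T-invariant subset of X x X; every pair in K again has orbits at
   distance at least delta (a closed, invariant condition), and the two coordinates
   of a pair in K lie in a common fiber (also closed and invariant).  The image of
   K under the first projection followed by pi is a nonempty compact S-invariant
   subset of Y, hence all of Y by minimality; so K contains a pair (u, v) over y0.
   That pair is proximal by hypothesis, contradicting the distance bound. *)

lemma dyn_system_props:
  assumes "dyn_system X T"
  shows "compact X" "continuous_on X T" "T ` X = X"
  using assms unfolding dyn_system_def homeomorphism_def by auto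

lemma factor_map_props:
  assumes "factor_map X T Y S \<pi>"
  shows "dyn_system X T" "continuous_on X \<pi>" "\<pi> ` X = Y"
    and "\<And>x. x \<in> X \<Longrightarrow> \<pi> (T x) = S (\<pi> x)"
  using assms unfolding factor_map_def by blast+

lemma funpow_in_invariant:
  fixes f :: "'a \<Rightarrow> 'a"
  assumes "f ` K \<subseteq> K" "p \<in> K"
  shows "(f ^^ n) p \<in> K"
proof (induction n)
  case (Suc n)
  then show ?case using assms(1) by auto
qed (simp add: assms(2))

lemma funpow_map_prod:
  fixes f :: "'a \<Rightarrow> 'a" and g :: "'b \<Rightarrow> 'b"
  shows "(map_prod f g ^^ n) (x, y) = ((f ^^ n) x, (g ^^ n) y)"
  by (induction n) simp_all

lemma factor_map_funpow:
  assumes \<pi>: "factor_map X T Y S \<pi>" and x: "x \<in> X"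
  shows "\<pi> ((T ^^ n) x) = (S ^^ n) (\<pi> x)"
proof (induction n)
  case (Suc n)
  have "T ` X \<subseteq> X" using dyn_system_props(3)[OF factor_map_props(1)[OF \<pi>]] by simp
  then have "(T ^^ n) x \<in> X" using x by (rule funpow_in_invariant)
  then have "\<pi> (T ((T ^^ n) x)) = S (\<pi> ((T ^^ n) x))" by (rule factor_map_props(4)[OF \<pi>])
  then show ?case using Suc by simp
qed simp

lemma proximal_pair_iff:
  "proximal_pair T x y \<longleftrightarrow> (\<forall>e>0. \<exists>n. dist ((T ^^ n) x) ((T ^^ n) y) < e)"
proof -
  define d where "d n = dist ((T ^^ n) x) ((T ^^ n) y)" for n
  have bdd: "bdd_below (range d)"
    by (rule bdd_belowI[of _ 0]) (auto simp: d_def)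
  have nonneg: "(INF n. d n) \<ge> 0"
    by (rule cINF_greatest) (auto simp: d_def)
  have "(INF n. d n) = 0 \<longleftrightarrow> (\<forall>e>0. (INF n. d n) < e)"
  proof
    assume "\<forall>e>0. (INF n. d n) < e"
    then have "\<not> (INF n. d n) > 0" by (meson less_irrefl)
    then show "(INF n. d n) = 0" using nonneg by simp
  qed simp
  also have "\<dots> \<longleftrightarrow> (\<forall>e>0. \<exists>n. d n < e)"
    using bdd by (simp add: cINF_less_iff)
  finally show ?thesis unfolding proximal_pair_def d_def .
qed

lemma not_proximal_pair_bound:
  assumes "\<not> proximal_pair T x y"
  obtains \<delta> where "\<delta> > 0" "\<And>n. \<delta> \<le> dist ((T ^^ n) x) ((T ^^ n) y)"
  using assms unfolding proximal_pair_iff by (auto simp: not_less)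

lemma orbit_closure_invariant:
  fixes f :: "'a::topological_space \<Rightarrow> 'a"
  assumes A: "closed A" "continuous_on A f" "f ` A \<subseteq> A" and a: "a \<in> A"
  shows "closure (range (\<lambda>n. (f ^^ n) a)) \<subseteq> A"
    and "f ` closure (range (\<lambda>n. (f ^^ n) a)) \<subseteq> closure (range (\<lambda>n. (f ^^ n) a))"
proof -
  let ?O = "range (\<lambda>n. (f ^^ n) a)"
  have "?O \<subseteq> A" using funpow_in_invariant[OF A(3) a] by blast
  then show KA: "closure ?O \<subseteq> A" using A(1) by (rule closure_minimal)
  have "f ((f ^^ n) a) \<in> ?O" for n
    using rangeI[of "\<lambda>n. (f ^^ n) a" "Suc n"] by simp
  then have "f ` ?O \<subseteq> ?O" by blast
  then have "f ` ?O \<subseteq> closure ?O" using closure_subset by blast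
  moreover have "continuous_on (closure ?O) f"
    using A(2) KA by (rule continuous_on_subset)
  ultimately show "f ` closure ?O \<subseteq> closure ?O"
    using image_closure_subset[of ?O f "closure ?O"] by simp
qed

lemma minimal_factor_image:
  assumes \<pi>: "factor_map X T Y S \<pi>" and min: "minimal_system Y S"
    and K: "compact K" "K \<subseteq> X" "K \<noteq> {}" "T ` K \<subseteq> K"
  shows "\<pi> ` K = Y"
proof -
  note cont = factor_map_props(2)[OF \<pi>] and onto = factor_map_props(3)[OF \<pi>]
    and comm = factor_map_props(4)[OF \<pi>]
  have "compact (\<pi> ` K)"
    using continuous_on_subset[OF cont K(2)] K(1) by (rule compact_continuous_image)
  moreover have "\<pi> ` K \<subseteq> Y" using K(2) onto by blast
  moreover have "S ` \<pi> ` K \<subseteq> \<pi> ` K"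
  proof
    fix z assume "z \<in> S ` \<pi> ` K"
    then obtain x where "x \<in> K" "z = S (\<pi> x)" by blast
    then have "z = \<pi> (T x)" and "T x \<in> K" using comm K(2,4) by auto
    then show "z \<in> \<pi> ` K" by blast
  qed
  ultimately show ?thesis
    using min K(3) unfolding minimal_system_def by (simp add: compact_imp_closed)
qed

lemma map_prod_invariant_fst:
  assumes "map_prod f g ` K \<subseteq> K"
  shows "f ` fst ` K \<subseteq> fst ` K"
proof
  fix z assume "z \<in> f ` fst ` K"
  then obtain p where p: "p \<in> K" "z = f (fst p)" by blast
  then have "map_prod f g p \<in> K" using assms by blast
  moreover have "z = fst (map_prod f g p)" using p(2) by (cases p) simp
  ultimately show "z \<in> fst ` K" by (rule rev_image_eqI)
qed

definition pair_orbit_closure :: "('a::topological_space \<Rightarrow> 'a) \<Rightarrow> 'a \<Rightarrow> 'a \<Rightarrow> ('a \<times> 'a) set" where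
  "pair_orbit_closure T x1 x2 = closure (range (\<lambda>n. (map_prod T T ^^ n) (x1, x2)))"

lemma pair_orbit_closure_props:
  fixes T :: "'a::metric_space \<Rightarrow> 'a"
  assumes sys: "dyn_system X T" and x12: "x1 \<in> X" "x2 \<in> X"
  defines "K \<equiv> pair_orbit_closure T x1 x2"
  shows "compact K" "K \<subseteq> X \<times> X" "map_prod T T ` K \<subseteq> K" "(x1, x2) \<in> K"
proof -
  note X = dyn_system_props[OF sys]
  have "closed (X \<times> X)" using X(1) by (simp add: closed_Times compact_imp_closed)
  moreover have "continuous_on (X \<times> X) (map_prod T T)"
    unfolding map_prod_def split_def
    by (intro continuous_on_Pair continuous_on_compose2[OF X(2)] continuous_intros) auto
  moreover have "map_prod T T ` (X \<times> X) \<subseteq> X \<times> X" using X(3) by auto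
  moreover have "(x1, x2) \<in> X \<times> X" using x12 by simp
  ultimately show KXX: "K \<subseteq> X \<times> X" and "map_prod T T ` K \<subseteq> K"
    unfolding K_def pair_orbit_closure_def by (rule orbit_closure_invariant)+
  have "closed K" unfolding K_def pair_orbit_closure_def by (rule closed_closure)
  then have "compact ((X \<times> X) \<inter> K)"
    using X(1) by (intro compact_Int_closed compact_Times)
  then show "compact K" using KXX by (simp add: Int_absorb1)
  have "(x1, x2) \<in> range (\<lambda>n. (map_prod T T ^^ n) (x1, x2))"
    using rangeI[of "\<lambda>n. (map_prod T T ^^ n) (x1, x2)" 0] by (simp only: funpow_0)
  then show "(x1, x2) \<in> K"
    unfolding K_def pair_orbit_closure_def by (rule closure_subset[THEN subsetD])
qed

text \<open>If x1 and x2 lie over the same base point, so does every pair in their orbit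
  closure: lying in a common fiber is a closed condition preserved along orbits.\<close>
lemma pair_orbit_closure_same_fiber:
  fixes T :: "'a::metric_space \<Rightarrow> 'a" and \<pi> :: "'a \<Rightarrow> 'b::metric_space"
  assumes \<pi>: "factor_map X T Y S \<pi>" and x12: "x1 \<in> X" "x2 \<in> X" "\<pi> x1 = \<pi> x2"
    and uv: "(u, v) \<in> pair_orbit_closure T x1 x2"
  shows "\<pi> u = \<pi> v"
proof -
  define E where "E = {p \<in> X \<times> X. \<pi> (fst p) = \<pi> (snd p)}"
  note cont = factor_map_props(2)[OF \<pi>]
  note X = dyn_system_props[OF factor_map_props(1)[OF \<pi>]]
  have "continuous_on (X \<times> X) (\<lambda>p. dist (\<pi> (fst p)) (\<pi> (snd p)))"
    by (intro continuous_on_dist continuous_on_compose2[OF cont] continuous_intros) auto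
  then have "closed ((X \<times> X) \<inter> (\<lambda>p. dist (\<pi> (fst p)) (\<pi> (snd p))) -` {0})"
    using X(1) by (intro continuous_closed_preimage) (auto simp: closed_Times compact_imp_closed)
  then have closedE: "closed E" unfolding E_def by (simp add: vimage_def Int_def conj_commute)
  have orbit_in_E: "(map_prod T T ^^ n) (x1, x2) \<in> E" for n
  proof -
    have "T ` X \<subseteq> X" using X(3) by simp
    then have "(T ^^ n) x1 \<in> X" "(T ^^ n) x2 \<in> X" using x12 by (auto intro: funpow_in_invariant)
    then show ?thesis
      using factor_map_funpow[OF \<pi>] x12 by (simp add: E_def funpow_map_prod)
  qed
  have "range (\<lambda>n. (map_prod T T ^^ n) (x1, x2)) \<subseteq> E"
    by (rule image_subsetI) (rule orbit_in_E)
  then have "pair_orbit_closure T x1 x2 \<subseteq> E"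
    unfolding pair_orbit_closure_def using closedE by (rule closure_minimal)
  then show ?thesis using uv unfolding E_def by auto
qed

lemma pair_orbit_closure_not_proximal:
  fixes T :: "'a::metric_space \<Rightarrow> 'a"
  assumes sys: "dyn_system X T" and x12: "x1 \<in> X" "x2 \<in> X"
    and \<delta>: "\<delta> > 0" "\<And>n. \<delta> \<le> dist ((T ^^ n) x1) ((T ^^ n) x2)"
    and uv: "(u, v) \<in> pair_orbit_closure T x1 x2"
  shows "\<not> proximal_pair T u v"
proof -
  define F where "F = {p :: 'a \<times> 'a. \<delta> \<le> dist (fst p) (snd p)}"
  have "closed F" unfolding F_def by (intro closed_Collect_le continuous_intros)
  have "(map_prod T T ^^ n) (x1, x2) \<in> F" for n
    using \<delta>(2) by (simp add: F_def funpow_map_prod)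
  then have "range (\<lambda>n. (map_prod T T ^^ n) (x1, x2)) \<subseteq> F"
    by (rule image_subsetI)
  then have far: "pair_orbit_closure T x1 x2 \<subseteq> F"
    unfolding pair_orbit_closure_def using \<open>closed F\<close> by (rule closure_minimal)
  have "(map_prod T T ^^ n) (u, v) \<in> pair_orbit_closure T x1 x2" for n
    using pair_orbit_closure_props(3)[OF sys x12] uv by (rule funpow_in_invariant)
  then have "(map_prod T T ^^ n) (u, v) \<in> F" for n
    using far by blast
  then have "\<delta> \<le> dist ((T ^^ n) u) ((T ^^ n) v)" for n
    by (simp add: F_def funpow_map_prod)
  then show ?thesis
    using \<delta>(1) unfolding proximal_pair_iff by (meson not_less)
qed

text \<open>Over a minimal base, the orbit closure of any pair meets the square of every
  fiber: its first coordinates form a compact invariant set, which covers the base.\<close>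
lemma pair_orbit_closure_meets_fiber:
  fixes T :: "'a::metric_space \<Rightarrow> 'a" and \<pi> :: "'a \<Rightarrow> 'b::metric_space"
  assumes \<pi>: "factor_map X T Y S \<pi>" and min: "minimal_system Y S"
    and x12: "x1 \<in> X" "x2 \<in> X" and y0: "y0 \<in> Y"
  obtains u v where "(u, v) \<in> pair_orbit_closure T x1 x2" "\<pi> u = y0"
proof -
  let ?K = "pair_orbit_closure T x1 x2"
  note K = pair_orbit_closure_props[OF factor_map_props(1)[OF \<pi>] x12]
  have "compact (fst ` ?K)" using K(1) by (intro compact_continuous_image continuous_intros)
  moreover have "fst ` ?K \<subseteq> X" and "fst ` ?K \<noteq> {}" using K(2,4) by force+
  moreover have "T ` fst ` ?K \<subseteq> fst ` ?K" using K(3) by (rule map_prod_invariant_fst)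
  ultimately have "\<pi> ` fst ` ?K = Y" by (rule minimal_factor_image[OF \<pi> min])
  then obtain p where "p \<in> ?K" "\<pi> (fst p) = y0" using y0 by (metis imageE)
  then show ?thesis using that[of "fst p" "snd p"] by simp
qed

theorem mainTheorem2:
  fixes X :: "'a::metric_space set" and T :: "'a \<Rightarrow> 'a"
    and Y :: "'b::metric_space set" and S :: "'b \<Rightarrow> 'b" and \<pi> :: "'a \<Rightarrow> 'b"
  assumes "factor_map X T Y S \<pi>"
    and "minimal_system Y S"
    and "y0 \<in> Y"
    and "proximal_set T (fiber X \<pi> y0)"
  shows "proximal_extension X T Y \<pi>"
  unfolding proximal_extension_def proximal_set_def
proof (intro ballI)
  fix y x1 x2 assume "y \<in> Y" "x1 \<in> fiber X \<pi> y" "x2 \<in> fiber X \<pi> y"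
  then have x12: "x1 \<in> X" "x2 \<in> X" and same: "\<pi> x1 = \<pi> x2" by (auto simp: fiber_def)
  note sys = factor_map_props(1)[OF assms(1)]
  show "proximal_pair T x1 x2"
  proof (rule ccontr)
    assume "\<not> proximal_pair T x1 x2"
    then obtain \<delta> where \<delta>: "\<delta> > 0" "\<And>n. \<delta> \<le> dist ((T ^^ n) x1) ((T ^^ n) x2)"
      by (rule not_proximal_pair_bound) blast
    obtain u v where uv: "(u, v) \<in> pair_orbit_closure T x1 x2" "\<pi> u = y0"
      using pair_orbit_closure_meets_fiber[OF assms(1,2) x12 assms(3)] .
    then have "u \<in> fiber X \<pi> y0" "v \<in> fiber X \<pi> y0"
      using pair_orbit_closure_props(2)[OF sys x12] pair_orbit_closure_same_fiber[OF assms(1) x12 same]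
      by (auto simp: fiber_def)
    then have "proximal_pair T u v" using assms(4) unfolding proximal_set_def by blast
    then show False using pair_orbit_closure_not_proximal[OF sys x12 \<delta> uv(1)] by blast
  qed
qed

end
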